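(* Let $\mathbb{F}$ be a field and $n\ge1$. For every $A\in M(n,\mathbb{F})$ we have $A\sim_{M(n,\mathbb{F})} A_s$. In particular, $A\sim_{M(n,\mathbb{F})} 0$ for every nilpotent $A\in M(n,\mathbb{F})$.
   Context: $M(n,\mathbb{F})$ denotes the semigroup of all $n\times n$ matrices over $\mathbb{F}$ under matrix multiplication, identified with linear operators on $\mathbb{F}^n$. Two elements $a,b$ of a semigroup $S$ are primarily $S$-conjugated if there are $x,y\in S$ with $a=xy$ and $b=yx$; $\sim_S$ is the transitive closure of primary $S$-conjugacy. For $A\in M(n,\mathbb{F})$ let $t\ge 0$ be such that $A^t(\mathbb{F}^n)=A^{t+i}(\mathbb{F}^n)$ for all $i\ge 0$; then $\mathbb{F}^n=A^t(\mathbb{F}^n)\oplus\ker(A^t)$, and $A_s$ is the linear operator with $A_s(v)=A(v)$ for $v\in A^t(\mathbb{F}^n)$ and $A_s(v)=0$ for $v\in\ker(A^t)$. *)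

theory Defs
  imports "HOL-Analysis.Analysis"
begin

primrec matpow :: "('a::comm_ring_1)^'n^'n \<Rightarrow> nat \<Rightarrow> 'a^'n^'n" where
  "matpow A 0 = mat 1"
| "matpow A (Suc k) = A ** matpow A k"

definition prim_conj :: "('a::comm_ring_1)^'n^'n \<Rightarrow> 'a^'n^'n \<Rightarrow> bool" where
  "prim_conj a b \<longleftrightarrow> (\<exists>x y. a = x ** y \<and> b = y ** x)"

definition matrix_conj :: "('a::comm_ring_1)^'n^'n \<Rightarrow> 'a^'n^'n \<Rightarrow> bool" where
  "matrix_conj = prim_conj\<^sup>+\<^sup>+"

definition img_pow :: "('a::comm_ring_1)^'n^'n \<Rightarrow> nat \<Rightarrow> ('a^'n) set" where
  "img_pow A t = range (\<lambda>v. matpow A t *v v)"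

definition ker_pow :: "('a::comm_ring_1)^'n^'n \<Rightarrow> nat \<Rightarrow> ('a^'n) set" where
  "ker_pow A t = {v. matpow A t *v v = 0}"

definition semisimple_part :: "('a::field)^'n^'n \<Rightarrow> 'a^'n^'n" where
  "semisimple_part A = (THE B. \<exists>t. (\<forall>i. img_pow A t = img_pow A (t + i)) \<and>
      (\<forall>v\<in>img_pow A t. B *v v = A *v v) \<and> (\<forall>v\<in>ker_pow A t. B *v v = 0))"

definition nilpotent_mat :: "('a::comm_ring_1)^'n^'n \<Rightarrow> bool" where
  "nilpotent_mat A \<longleftrightarrow> (\<exists>k. matpow A k = 0)"

end

theory Submission
  imports Defs
begin

text \<open>Choose \<open>t\<close> such that the images and kernels of the powers of \<open>A\<close> are stable
  from \<open>t\<close> on, and let \<open>P\<close> be the projection onto \<open>A\<^sup>t(F\<^sup>n)\<close> along \<open>ker(A\<^sup>t)\<close>.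
  Both spaces are \<open>A\<close>-invariant, so \<open>P\<close> commutes with \<open>A\<close>, \<open>A\<^sub>s = AP\<close>, and
  \<open>N = A - AP\<close> is nilpotent with \<open>PN = NP = 0\<close>.
  For any such splitting \<open>S + N\<close> (with \<open>SP = PS = S\<close>) let \<open>Q\<close> project onto the range
  of \<open>N\<close> along the range of \<open>P\<close>. Then \<open>S + N = (P + Q)(S + N)\<close> and
  \<open>(S + N)(P + Q) = S + NQ\<close>, where \<open>NQ\<close> is again nilpotent and annihilated by \<open>P\<close>
  on both sides, but has smaller rank, its range lying in that of \<open>N\<^sup>2\<close>.
  Induction on the rank of \<open>N\<close> gives \<open>S + N \<sim> S\<close>.\<close>

lemma matrix_add_rdistrib: "(B + C) ** A = B ** A + C ** (A :: 'a::semiring_1^'k^'m)"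
  by (vector matrix_matrix_mult_def sum.distrib[symmetric] field_simps)

lemma matrix_diff_ldistrib: "A ** (B - C) = A ** B - A ** (C :: 'a::ring_1^'k^'m)"
  by (vector matrix_matrix_mult_def sum_subtractf[symmetric] field_simps)

lemma matrix_diff_rdistrib: "(B - C) ** A = B ** A - C ** (A :: 'a::ring_1^'k^'m)"
  by (vector matrix_matrix_mult_def sum_subtractf[symmetric] field_simps)

lemma matpow_Suc_right: "matpow A (Suc k) = matpow A k ** A"
  by (induction k) (simp_all add: matrix_mul_assoc)

lemma matpow_add: "matpow A (k + l) = matpow A k ** matpow A l"
  by (induction k) (simp_all add: matrix_mul_assoc)

lemma matpow_commute: "A ** matpow A k = matpow A k ** A"
  using matpow_Suc_right by (metis matpow.simps(2))

lemma subspace_range_matrix: "vec.subspace (range ((*v) (M :: 'a::field^'n^'m)))"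
  by (simp add: vec.subspace_UNIV vec.subspace_image)

lemma subspace_kernel_matrix: "vec.subspace {v. (M :: 'a::field^'n^'m) *v v = 0}"
  by (simp add: vec.subspace_kernel)

lemma exists_projection_along:
  fixes U W :: "('a::field^'n) set"
  assumes U: "vec.subspace U" and W: "vec.subspace W" and UW: "U \<inter> W \<subseteq> {0}"
  obtains Q :: "'a^'n^'n"
  where "\<And>u. u \<in> U \<Longrightarrow> Q *v u = u" "\<And>w. w \<in> W \<Longrightarrow> Q *v w = 0" "\<And>v. Q *v v \<in> U"
proof -
  obtain BU where BU: "BU \<subseteq> U" "vec.independent BU" "U \<subseteq> vec.span BU" "card BU = vec.dim U"
    by (rule vec.basis_exists)
  obtain BW where BW: "BW \<subseteq> W" "vec.independent BW" "W \<subseteq> vec.span BW" "card BW = vec.dim W"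
    by (rule vec.basis_exists)
  let ?UW = "{x + y |x y. x \<in> U \<and> y \<in> W}"
  \<comment> \<open>\<open>BU \<union> BW\<close> spans \<open>U + W\<close>, whose dimension is \<open>card BU + card BW\<close> as \<open>U \<inter> W = 0\<close>\<close>
  have indep: "vec.independent (BU \<union> BW)"
  proof (rule vec.card_le_dim_spanning[of _ ?UW])
    show "BU \<union> BW \<subseteq> ?UW"
      using BU(1) BW(1) vec.subspace_0[OF U] vec.subspace_0[OF W] by force
    show "?UW \<subseteq> vec.span (BU \<union> BW)"
      using BU(3) BW(3) by (auto simp: vec.span_Un)
    show "finite (BU \<union> BW)"
      using BU(2) BW(2) by (simp add: vec.finiteI_independent)
    have "vec.dim (U \<inter> W) = 0"
      using UW by (simp add: vec.dim_eq_0)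
    then have "vec.dim ?UW = vec.dim U + vec.dim W"
      using vec.dim_sums_Int[OF U W] by linarith
    then show "card (BU \<union> BW) \<le> vec.dim ?UW"
      using BU(4) BW(4) card_Un_le by metis
  qed
  define f where "f = vec.construct (BU \<union> BW) (\<lambda>b. if b \<in> BU then b else 0)"
  have lin: "Vector_Spaces.linear (*s) (*s) f"
    unfolding f_def using indep by (rule vec.linear_construct)
  have f_basis: "f b = (if b \<in> BU then b else 0)" if "b \<in> BU \<union> BW" for b
    unfolding f_def using indep that by (rule vec.construct_basis)
  have "b \<notin> BU" if "b \<in> BW" for b
    using that BU(1) BW(1,2) UW vec.dependent_zero by blast
  then have "f b = 0" if "b \<in> BW" for b
    using that f_basis by simp
  then have f_W: "f w = 0" if "w \<in> W" for w
    using vec.linear_eq_on[OF lin vec.linear_zero] that BW(3) by blast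
  have f_U: "f u = u" if "u \<in> U" for u
    using vec.linear_eq_on[OF lin vec.linear_id] that BU(3) f_basis by auto
  have f_range: "f v \<in> U" for v
  proof -
    have "f v \<in> vec.span ((\<lambda>b. if b \<in> BU then b else 0) ` (BU \<union> BW))"
      unfolding f_def using indep by (rule vec.construct_in_span)
    also have "\<dots> \<subseteq> U"
      using BU(1) vec.subspace_0[OF U] by (auto intro!: vec.span_minimal[OF _ U])
    finally show ?thesis .
  qed
  show thesis
    by (rule that[of "matrix f"]) (simp_all add: matrix_works[OF lin] f_U f_W f_range)
qed

lemma subspace_img_pow: "vec.subspace (img_pow (A :: 'a::field^'n^'n) k)"
  unfolding img_pow_def by (rule subspace_range_matrix)

lemma subspace_ker_pow: "vec.subspace (ker_pow (A :: 'a::field^'n^'n) k)"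
  unfolding ker_pow_def by (rule subspace_kernel_matrix)

lemma img_pow_add_subset: "img_pow A (k + i) \<subseteq> img_pow A k"
  unfolding img_pow_def by (auto simp: matpow_add matrix_vector_mul_assoc[symmetric])

lemma ker_pow_subset_add: "ker_pow A k \<subseteq> ker_pow A (k + i)"
  unfolding ker_pow_def
  by (auto simp: add.commute[of k] matpow_add matrix_vector_mul_assoc[symmetric])

lemma img_pow_mult_invariant:
  assumes "v \<in> img_pow A k"
  shows "A *v v \<in> img_pow A k"
proof -
  obtain w where "v = matpow A k *v w"
    using assms by (auto simp: img_pow_def)
  then have "A *v v = matpow A k *v (A *v w)"
    by (simp add: matrix_vector_mul_assoc matpow_commute)
  then show ?thesis
    by (simp add: img_pow_def)
qed

lemma ker_pow_mult_invariant: "v \<in> ker_pow A k \<Longrightarrow> A *v v \<in> ker_pow A k"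
  unfolding ker_pow_def by (simp add: matrix_vector_mul_assoc matpow_commute[symmetric])
    (simp add: matrix_vector_mul_assoc[symmetric])

lemma img_pow_eventually_stable:
  "\<exists>t. \<forall>i. img_pow (A :: 'a::field^'n^'n) t = img_pow A (t + i)"
proof -
  obtain t where t: "\<And>k. vec.dim (img_pow A t) \<le> vec.dim (img_pow A k)"
    using ex_has_least_nat[of "\<lambda>_. True" 0 "\<lambda>k. vec.dim (img_pow A k)"] by auto
  have "img_pow A (t + i) = img_pow A t" for i
    using subspace_img_pow subspace_img_pow img_pow_add_subset t by (rule vec.subspace_dim_equal)
  then show ?thesis by metis
qed

lemma ker_pow_eventually_stable:
  "\<exists>t. \<forall>i. ker_pow (A :: 'a::field^'n^'n) t = ker_pow A (t + i)"
proof -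
  have "vec.dim (ker_pow A k) < Suc (vec.dim (UNIV :: ('a^'n) set))" for k
    using vec.dim_subset[OF subset_UNIV, of "ker_pow A k"] by linarith
  then obtain t where t: "\<And>k. vec.dim (ker_pow A k) \<le> vec.dim (ker_pow A t)"
    using Lattices_Big.ex_has_greatest_nat[of "\<lambda>_. True" 0 "\<lambda>k. vec.dim (ker_pow A k)"] by blast
  have "ker_pow A t = ker_pow A (t + i)" for i
    using subspace_ker_pow subspace_ker_pow ker_pow_subset_add t by (rule vec.subspace_dim_equal)
  then show ?thesis by metis
qed

lemma img_pow_ker_pow_decompose:
  assumes "img_pow A t = img_pow A (t + t)"
  obtains u where "u \<in> img_pow A t" "v - u \<in> ker_pow A t"
proof -
  have "matpow A t *v v \<in> img_pow A (t + t)"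
    using assms unfolding img_pow_def by auto
  then obtain w where w: "matpow A t *v v = matpow A t *v (matpow A t *v w)"
    unfolding img_pow_def by (auto simp: matpow_add matrix_vector_mul_assoc)
  show thesis
    by (rule that[of "matpow A t *v w"]) (auto simp: img_pow_def ker_pow_def w algebra_simps)
qed

lemma img_pow_inter_ker_pow:
  assumes "ker_pow A t = ker_pow A (t + t)"
  shows "img_pow A t \<inter> ker_pow A t \<subseteq> {0}"
proof
  fix u assume "u \<in> img_pow A t \<inter> ker_pow A t"
  then obtain w where u: "u = matpow A t *v w" and "matpow A t *v u = 0"
    by (auto simp: img_pow_def ker_pow_def)
  then have "w \<in> ker_pow A (t + t)"
    by (simp add: ker_pow_def matpow_add matrix_vector_mul_assoc)
  then have "w \<in> ker_pow A t"
    using assms by simp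
  then show "u \<in> {0}"
    using u by (simp add: ker_pow_def)
qed

lemma fitting_index_exists:
  fixes A :: "'a::field^'n^'n"
  obtains t where "\<And>i. img_pow A t = img_pow A (t + i)" "ker_pow A t = ker_pow A (t + t)"
proof -
  obtain t1 where t1: "\<And>i. img_pow A t1 = img_pow A (t1 + i)"
    using img_pow_eventually_stable by blast
  obtain t2 where t2: "\<And>i. ker_pow A t2 = ker_pow A (t2 + i)"
    using ker_pow_eventually_stable by blast
  show thesis
  proof (rule that[of "t1 + t2"])
    show "img_pow A (t1 + t2) = img_pow A (t1 + t2 + i)" for i
      by (metis t1 add.assoc)
    show "ker_pow A (t1 + t2) = ker_pow A (t1 + t2 + (t1 + t2))"
      by (metis t2 add.commute add.left_commute)
  qed
qed

definition is_semisimple_part_at :: "('a::field)^'n^'n \<Rightarrow> nat \<Rightarrow> 'a^'n^'n \<Rightarrow> bool" where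
  "is_semisimple_part_at A t B \<longleftrightarrow> (\<forall>i. img_pow A t = img_pow A (t + i)) \<and>
      (\<forall>v\<in>img_pow A t. B *v v = A *v v) \<and> (\<forall>v\<in>ker_pow A t. B *v v = 0)"

lemma is_semisimple_part_at_unique:
  fixes A :: "'a::field^'n^'n"
  assumes B1: "is_semisimple_part_at A t1 B1" and B2: "is_semisimple_part_at A t2 B2"
    and "t1 \<le> t2"
  shows "B1 = B2"
  unfolding matrix_eq
proof
  fix v :: "'a^'n"
  have img: "img_pow A t1 = img_pow A t2"
    using B1 \<open>t1 \<le> t2\<close> unfolding is_semisimple_part_at_def by (metis le_add_diff_inverse)
  have ker: "ker_pow A t1 \<subseteq> ker_pow A t2"
    using ker_pow_subset_add \<open>t1 \<le> t2\<close> by (metis le_add_diff_inverse)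
  obtain u where u: "u \<in> img_pow A t1" "v - u \<in> ker_pow A t1"
    using B1 img_pow_ker_pow_decompose unfolding is_semisimple_part_at_def by metis
  have "B *v v = B *v u + B *v (v - u)" for B :: "'a^'n^'n"
    by (simp add: algebra_simps)
  then show "B1 *v v = B2 *v v"
    using B1 B2 u img ker unfolding is_semisimple_part_at_def by auto
qed

lemma semisimple_part_eqI:
  assumes "is_semisimple_part_at A t B"
  shows "semisimple_part A = B"
  unfolding semisimple_part_def is_semisimple_part_at_def[symmetric]
proof (rule the_equality)
  show "\<exists>t. is_semisimple_part_at A t B"
    using assms by blast
  fix B' assume "\<exists>t. is_semisimple_part_at A t B'"
  then obtain t' where "is_semisimple_part_at A t' B'" ..
  then show "B' = B"
    using assms is_semisimple_part_at_unique nat_le_linear by metis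
qed

lemma range_matrix_mult: "range ((*v) (M ** M')) = (*v) M ` range ((*v) M')"
  by (auto simp: matrix_vector_mul_assoc[symmetric] image_image)

lemma dim_range_mult_self_less:
  fixes N :: "'a::field^'n^'n"
  assumes "matpow N k = 0" "N \<noteq> 0"
  shows "vec.dim (range ((*v) (N ** N))) < vec.dim (range ((*v) N))"
proof (rule ccontr)
  assume "\<not> ?thesis"
  then have "range ((*v) (N ** N)) = range ((*v) N)"
    by (intro vec.subspace_dim_equal[OF subspace_range_matrix subspace_range_matrix])
      (auto simp: range_matrix_mult)
  then have "range ((*v) (matpow N (Suc j))) = range ((*v) N)" for j
    by (induction j) (simp_all only: matpow.simps range_matrix_mult matrix_mul_rid)
  from this[of k] have "range ((*v) N) = {0}"
    using assms(1) by auto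
  then show False
    using assms(2) by (auto simp: matrix_eq)
qed

lemma matpow_Suc_mult_of_left_unit:
  fixes N Q :: "'a::comm_ring_1^'n^'n"
  assumes "Q ** N = N"
  shows "matpow (N ** Q) (Suc j) = N ** matpow N j ** Q"
proof (induction j)
  case (Suc j)
  have "matpow (N ** Q) (Suc (Suc j)) = N ** (Q ** N) ** matpow N j ** Q"
    using Suc by (simp add: matrix_mul_assoc)
  then show ?case
    using assms by (simp add: matrix_mul_assoc)
qed simp

lemma prim_conj_add_reduce:
  fixes P S N :: "'a::field^'n^'n"
  assumes PP: "P ** P = P" and PN: "P ** N = 0" and NP: "N ** P = 0"
    and SP: "S ** P = S" and PS: "P ** S = S"
  obtains Q where "prim_conj (S + N) (S + N ** Q)" "Q ** N = N" "Q ** P = 0"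
    "range ((*v) (N ** Q)) \<subseteq> range ((*v) (N ** N))"
proof -
  have "range ((*v) N) \<inter> range ((*v) P) \<subseteq> {0}"
  proof
    fix v assume "v \<in> range ((*v) N) \<inter> range ((*v) P)"
    then obtain w u where "v = N *v w" "v = P *v u"
      by blast
    then have "P *v v = v" "P *v v = 0"
      using PP PN by (metis matrix_vector_mul_assoc matrix_vector_mult_0)+
    then show "v \<in> {0}" by simp
  qed
  then obtain Q where Q: "\<And>u. u \<in> range ((*v) N) \<Longrightarrow> Q *v u = u"
    "\<And>w. w \<in> range ((*v) P) \<Longrightarrow> Q *v w = 0" "\<And>v. Q *v v \<in> range ((*v) N)"
    using exists_projection_along[OF subspace_range_matrix subspace_range_matrix] by blast
  have QN: "Q ** N = N" and QP: "Q ** P = 0"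
    using Q(1,2) by (auto simp: matrix_eq matrix_vector_mul_assoc[symmetric])
  have PQ: "P ** Q = 0"
  proof -
    have "P *v (Q *v v) = 0" for v
      using Q(3)[of v] PN by (metis matrix_vector_mul_assoc matrix_vector_mult_0 rangeE)
    then show ?thesis
      by (simp add: matrix_eq matrix_vector_mul_assoc)
  qed
  have QS: "Q ** S = 0"
    using PS QP by (metis matrix_mul_assoc times0_left)
  have SQ: "S ** Q = 0"
    using SP PQ by (metis matrix_mul_assoc times0_right)
  have "prim_conj (S + N) (S + N ** Q)"
    unfolding prim_conj_def
  proof (intro exI conjI)
    show "S + N = (P + Q) ** (S + N)"
      using PN PS QN QS by (simp add: matrix_add_ldistrib matrix_add_rdistrib)
    show "S + N ** Q = (S + N) ** (P + Q)"
      using NP SP SQ by (simp add: matrix_add_ldistrib matrix_add_rdistrib)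
  qed
  moreover have "range ((*v) (N ** Q)) \<subseteq> range ((*v) (N ** N))"
    using Q(3) by (auto simp: range_matrix_mult)
  ultimately show thesis
    using that QN QP by blast
qed

lemma rtranclp_prim_conj_add_nilpotent:
  fixes P S N :: "'a::field^'n^'n"
  assumes "P ** P = P" "P ** N = 0" "N ** P = 0" "S ** P = S" "P ** S = S" "matpow N k = 0"
  shows "prim_conj\<^sup>*\<^sup>* (S + N) S"
  using assms
proof (induction "vec.dim (range ((*v) N))" arbitrary: N k rule: less_induct)
  case less
  show ?case
  proof (cases "N = 0")
    case False
    obtain Q where step: "prim_conj (S + N) (S + N ** Q)" and QN: "Q ** N = N"
      and QP: "Q ** P = 0" and range_NQ: "range ((*v) (N ** Q)) \<subseteq> range ((*v) (N ** N))"
      using prim_conj_add_reduce[OF less.prems(1-5)] by blast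
    have "vec.dim (range ((*v) (N ** Q))) \<le> vec.dim (range ((*v) (N ** N)))"
      using range_NQ by (rule vec.dim_subset)
    then have "vec.dim (range ((*v) (N ** Q))) < vec.dim (range ((*v) N))"
      using dim_range_mult_self_less[OF less.prems(6) False] by linarith
    moreover have "matpow (N ** Q) (Suc k) = 0"
      using matpow_Suc_mult_of_left_unit[OF QN] less.prems(6) by simp
    moreover have "P ** (N ** Q) = 0" "N ** Q ** P = 0"
      using less.prems(2) QP by (metis matrix_mul_assoc times0_left times0_right)+
    ultimately have "prim_conj\<^sup>*\<^sup>* (S + N ** Q) S"
      using less.hyps less.prems(1,4,5) by blast
    with step show ?thesis
      by (rule converse_rtranclp_into_rtranclp)
  qed simp
qed

lemma matpow_mult_vector_eq_on_invariant:
  assumes "\<And>k. k \<in> K \<Longrightarrow> A *v k \<in> K" "\<And>k. k \<in> K \<Longrightarrow> N *v k = A *v k" "k \<in> K"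
  shows "matpow N j *v k = matpow A j *v k"
  using assms(3)
proof (induction j arbitrary: k)
  case (Suc j)
  have "matpow N (Suc j) *v k = matpow N j *v (N *v k)"
    by (simp only: matpow_Suc_right matrix_vector_mul_assoc)
  also have "\<dots> = matpow A j *v (A *v k)"
    using Suc assms(1,2) by simp
  also have "\<dots> = matpow A (Suc j) *v k"
    by (simp only: matpow_Suc_right matrix_vector_mul_assoc)
  finally show ?case .
qed simp

lemma fitting_projection_exists:
  fixes A :: "'a::field^'n^'n"
  obtains t P where "\<And>i. img_pow A t = img_pow A (t + i)"
    "\<And>u. u \<in> img_pow A t \<Longrightarrow> P *v u = u" "\<And>k. k \<in> ker_pow A t \<Longrightarrow> P *v k = 0"
    "\<And>v. v - P *v v \<in> ker_pow A t" "P ** P = P" "P ** A = A ** P"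
proof -
  obtain t where img_stable: "\<And>i. img_pow A t = img_pow A (t + i)"
    and ker_stable: "ker_pow A t = ker_pow A (t + t)"
    using fitting_index_exists by blast
  let ?I = "img_pow A t" and ?K = "ker_pow A t"
  obtain P where P_I: "\<And>u. u \<in> ?I \<Longrightarrow> P *v u = u" and P_K: "\<And>k. k \<in> ?K \<Longrightarrow> P *v k = 0"
    and P_range: "\<And>v. P *v v \<in> ?I"
    using exists_projection_along[OF subspace_img_pow subspace_ker_pow
        img_pow_inter_ker_pow[OF ker_stable]] by blast
  have P_complement: "v - P *v v \<in> ?K" for v
  proof -
    obtain u where u: "u \<in> ?I" "v - u \<in> ?K"
      using img_pow_ker_pow_decompose img_stable by metis
    have "P *v v = P *v u + P *v (v - u)"
      by (simp add: algebra_simps)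
    then show ?thesis
      using u P_I P_K by simp
  qed
  have PP: "P ** P = P"
    using P_I P_range by (simp add: matrix_eq matrix_vector_mul_assoc[symmetric])
  have PA: "P ** A = A ** P"
  proof -
    have "P *v (A *v v) = A *v (P *v v)" for v
    proof -
      have "A *v v = A *v (P *v v) + A *v (v - P *v v)"
        by (simp add: algebra_simps)
      then show ?thesis
        using P_I P_K img_pow_mult_invariant[OF P_range] ker_pow_mult_invariant[OF P_complement]
        by (simp add: matrix_vector_right_distrib)
    qed
    then show ?thesis
      by (simp add: matrix_eq matrix_vector_mul_assoc[symmetric])
  qed
  show thesis
    by (rule that[OF img_stable P_I P_K P_complement PP PA])
qed

lemma semisimple_part_nilpotent_decomposition:
  fixes A :: "'a::field^'n^'n"
  obtains P N k where "P ** P = P" "P ** N = 0" "N ** P = 0"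
    "semisimple_part A ** P = semisimple_part A" "P ** semisimple_part A = semisimple_part A"
    "matpow N k = 0" "A = semisimple_part A + N"
proof -
  obtain t P where img_stable: "\<And>i. img_pow A t = img_pow A (t + i)"
    and P_I: "\<And>u. u \<in> img_pow A t \<Longrightarrow> P *v u = u"
    and P_K: "\<And>k. k \<in> ker_pow A t \<Longrightarrow> P *v k = 0"
    and P_complement: "\<And>v. v - P *v v \<in> ker_pow A t" and PP: "P ** P = P" and PA: "P ** A = A ** P"
    using fitting_projection_exists[of A] by blast
  let ?K = "ker_pow A t"
  define S where "S = A ** P"
  define N where "N = A - S"
  have S_eq: "semisimple_part A = S"
    by (rule semisimple_part_eqI[of A t])
      (auto simp: is_semisimple_part_at_def S_def img_stable P_I P_K
        matrix_vector_mul_assoc[symmetric])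
  have N_range: "N *v v \<in> ?K" for v
  proof -
    have "N *v v = A *v (v - P *v v)"
      by (simp add: N_def S_def algebra_simps matrix_vector_mul_assoc)
    then show ?thesis
      using ker_pow_mult_invariant[OF P_complement] by simp
  qed
  have N_on_K: "N *v k = A *v k" if "k \<in> ?K" for k
    using that P_K by (simp add: N_def S_def algebra_simps matrix_vector_mul_assoc[symmetric])
  have "matpow N (Suc t) *v v = 0" for v
  proof -
    have "matpow N (Suc t) *v v = matpow N t *v (N *v v)"
      by (simp only: matpow_Suc_right matrix_vector_mul_assoc)
    also have "\<dots> = matpow A t *v (N *v v)"
      by (rule matpow_mult_vector_eq_on_invariant[OF ker_pow_mult_invariant N_on_K N_range])
    also have "\<dots> = 0"
      using N_range by (simp add: ker_pow_def)
    finally show ?thesis .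
  qed
  then have "matpow N (Suc t) = 0"
    by (simp add: matrix_eq)
  moreover have "P ** N = 0" "N ** P = 0" "S ** P = S" "P ** S = S"
    using PP PA by (simp_all add: N_def S_def matrix_diff_ldistrib matrix_diff_rdistrib matrix_mul_assoc)
      (metis matrix_mul_assoc)+
  ultimately show thesis
    using that[of P N "Suc t"] PP by (simp add: S_eq N_def)
qed

lemma prim_conj_refl: "prim_conj A A"
  unfolding prim_conj_def by (intro exI[of _ A] exI[of _ "mat 1"]) simp

lemma matrix_conj_if_rtranclp_prim_conj:
  assumes "prim_conj\<^sup>*\<^sup>* A B"
  shows "matrix_conj A B"
  unfolding matrix_conj_def using assms prim_conj_refl by (rule rtranclp_into_tranclp1)

theorem lemma2:
  fixes A :: "('a::field)^'n^'n"
  shows "matrix_conj A (semisimple_part A)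
    \<and> (\<forall>N :: 'a^'n^'n. nilpotent_mat N \<longrightarrow> matrix_conj N 0)"
proof (intro conjI allI impI)
  obtain P N k where split: "P ** P = P" "P ** N = 0" "N ** P = 0"
    "semisimple_part A ** P = semisimple_part A" "P ** semisimple_part A = semisimple_part A"
    "matpow N k = 0" and A_eq: "A = semisimple_part A + N"
    by (rule semisimple_part_nilpotent_decomposition)
  from split have "prim_conj\<^sup>*\<^sup>* (semisimple_part A + N) (semisimple_part A)"
    by (rule rtranclp_prim_conj_add_nilpotent)
  then show "matrix_conj A (semisimple_part A)"
    unfolding A_eq[symmetric] by (rule matrix_conj_if_rtranclp_prim_conj)
next
  fix N :: "'a^'n^'n"
  assume "nilpotent_mat N"
  then obtain k where "matpow N k = 0"
    unfolding nilpotent_mat_def ..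
  then have "prim_conj\<^sup>*\<^sup>* (0 + N) 0"
    by (intro rtranclp_prim_conj_add_nilpotent[where P = 0]) simp_all
  then show "matrix_conj N 0"
    by (simp add: matrix_conj_if_rtranclp_prim_conj)
qed

end
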